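(* Let $n>2$ be an integer, $q=2^n$, $a_1\in\mathbb{F}_q^{*}$, $a_2,a_3\in\mathbb{F}_{q^2}^{*}$ with $a_1,a_2,a_3$ pairwise different and $a_1+a_2+a_3\neq0$, and let $b\in\mathbb{F}_{q^2}^{*}$. For $i=1,2,3$ let $f_i(x)=\mathrm{Tr}_1^{2n}\!\left(\frac{a_i}{x^{q-1}+b}\right)$ for $x\in\mathbb{F}_{q^2}$, and let $h_3=f_1f_2+f_1f_3+f_2f_3$. Then $h_3$ is bent if one of the following conditions holds: (1) $b=1$, $a_2\in\mathbb{F}_q^{*}$, $a_3\notin\mathbb{F}_q$, and $\mathrm{Tr}_1^n(a_1+a_2)=1$; (2) $b=1$, $a_2\notin\mathbb{F}_q$, $a_3\notin\mathbb{F}_q$, $a_2+a_3\in\mathbb{F}_q$, $\mathrm{Tr}_1^n(a_2+a_3)=0$ and $\mathrm{Tr}_1^{2n}(a_2)=0$; (3) $b\in U\setminus\{1\}$, $\mathrm{Tr}_n^{2n}(a_2\overline{b})=\mathrm{Tr}_n^{2n}(a_3\overline{b})=0$, $\mathrm{Tr}_1^n(a_2\overline{a_2}+a_3\overline{a_3})=1$ and $h_3(0)=0$; (4) $b\in U\setminus\{1\}$, $\mathrm{Tr}_n^{2n}(a_2\overline{b})=0$, $\mathrm{Tr}_n^{2n}(a_3\overline{b})\neq0$, $\mathrm{Tr}_n^{2n}((a_1+a_2+a_3)\overline{b})=0$, $\mathrm{Tr}_1^n(a_2\overline{a_2})=\mathrm{Tr}_1^n((a_1+a_2+a_3)(a_1+\overline{a_2}+\overline{a_3}))$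 and $h_3(0)=0$; (5) $b\in U\setminus\{1\}$, $\mathrm{Tr}_n^{2n}(a_2\overline{b})\neq0$, $\mathrm{Tr}_n^{2n}(a_3\overline{b})\neq0$, $\mathrm{Tr}_n^{2n}((a_1+a_2+a_3)\overline{b})\neq0$ and $h_3(0)=0$; (6) $b\notin U$ and $2(-1)^{h_3(0)}=2(-1)^{u(a_1)u(a_2)+u(a_1)u(a_3)+u(a_2)u(a_3)}+(-1)^{u(a_1+a_2+a_3)}k(a_1+a_2+a_3)-\sum_{i=1}^{3}(-1)^{u(a_i)}k(a_i)$, where $k(x)=\mathcal{K}_n\!\left(\frac{x\overline{x}}{1+b^2\overline{b}^2}\right)$ and $u(x)=\mathrm{Tr}_1^{2n}\!\left(\frac{\overline{x}b}{1+b\overline{b}}\right)$.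
   Context: For $k\mid m$, $\mathrm{Tr}_k^{m}(x)=x+x^{2^k}+\cdots+x^{2^{(m/k-1)k}}$ is the trace from $\mathbb{F}_{2^m}$ to $\mathbb{F}_{2^k}$. For $x\in\mathbb{F}_{q^2}$ write $\overline{x}=x^{q}$. The unit circle is $U=\{\eta\in\mathbb{F}_{q^2}:\eta^{q+1}=1\}$. Division by zero is interpreted with the convention $\frac{1}{0}=0$. The binary Kloosterman sum is $\mathcal{K}_n(a)=\sum_{x\in\mathbb{F}_{2^n}}(-1)^{\mathrm{Tr}_1^n(\frac1x+ax)}$ (with $\frac10=0$). Values in $\mathbb{F}_2$ appearing in exponents of $-1$ are identified with $0,1\in\mathbb{Z}$. A Boolean function $f:\mathbb{F}_{2^{m}}\to\mathbb{F}_2$ is bent if its Walsh transform $W_f(\omega)=\sum_{x\in\mathbb{F}_{2^m}}(-1)^{f(x)+\mathrm{Tr}_1^m(\omega x)}$ satisfies $W_f(\omega)^2=2^m$ for all $\omega\in\mathbb{F}_{2^m}$. *)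

theory Defs
  imports Main
begin

text \<open>The field F_{q^2}, q = 2^n, is modelled as a finite field type 'a with
  CARD('a) = 2^(2n). Subfields are described inside it.\<close>

definition tr :: "nat \<Rightarrow> nat \<Rightarrow> 'a::comm_ring_1 \<Rightarrow> 'a" where
  "tr k m x = (\<Sum>i<m div k. x ^ (2 ^ (k * i)))"

text \<open>(-1)^y for y in F_2 (embedded as 0,1 in the field).\<close>
definition chi :: "'a::zero \<Rightarrow> int" where
  "chi y = (if y = 0 then 1 else -1)"

definition Fq :: "nat \<Rightarrow> 'a::comm_ring_1 set" where
  "Fq n = {x. x ^ (2 ^ n) = x}"

definition cj :: "nat \<Rightarrow> 'a::comm_ring_1 \<Rightarrow> 'a" where
  "cj n x = x ^ (2 ^ n)"

definition unit_circle :: "nat \<Rightarrow> 'a::comm_ring_1 set" where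
  "unit_circle n = {x. x ^ (2 ^ n + 1) = 1}"

definition walsh :: "nat \<Rightarrow> ('a::{comm_ring_1,finite} \<Rightarrow> 'a) \<Rightarrow> 'a \<Rightarrow> int" where
  "walsh m f w = (\<Sum>x\<in>UNIV. chi (f x + tr 1 m (w * x)))"

definition bent :: "nat \<Rightarrow> ('a::{comm_ring_1,finite} \<Rightarrow> 'a) \<Rightarrow> bool" where
  "bent m f \<longleftrightarrow> (\<forall>w. (walsh m f w)\<^sup>2 = 2 ^ m)"

text \<open>Binary Kloosterman sum over F_{2^n} (subfield of 'a); inverse 0 = 0.\<close>
definition kloost :: "nat \<Rightarrow> 'a::field \<Rightarrow> int" where
  "kloost n a = (\<Sum>x\<in>Fq n. chi (tr 1 n (inverse x + a * x)))"

text \<open>f_i(x) = Tr_1^{2n}(a / (x^(q-1) + b)), with a/0 = 0.\<close>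
definition ff :: "nat \<Rightarrow> 'a::field \<Rightarrow> 'a \<Rightarrow> 'a \<Rightarrow> 'a" where
  "ff n a b x = tr 1 (2 * n) (a / (x ^ (2 ^ n - 1) + b))"

definition h3 :: "nat \<Rightarrow> 'a::field \<Rightarrow> 'a \<Rightarrow> 'a \<Rightarrow> 'a \<Rightarrow> 'a \<Rightarrow> 'a" where
  "h3 n a1 a2 a3 b x =
     ff n a1 b x * ff n a2 b x + ff n a1 b x * ff n a3 b x + ff n a2 b x * ff n a3 b x"

end

theory Submission
  imports Defs "HOL-Computational_Algebra.Polynomial"
begin

text \<open>
  Write \<open>q = 2^n\<close> and \<open>U\<close> for the unit circle. Since \<open>h3 x\<close> only depends on
  \<open>y = x^(q-1) \<in> U\<close>, we have \<open>h3 x = G (x^(q-1))\<close>, where \<open>G y\<close> is the majority of the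
  three bits \<open>Tr(a\<^sub>i / (y + b))\<close>. Averaging the Walsh transform of such a function over the
  scalings \<open>x \<mapsto> l x\<close>, \<open>l \<in> F\<^sub>q\<^sup>*\<close>, which leave it invariant, gives
  \<open>W(w) = \<chi>(G 0) - S + q \<chi>(G (w\<^sup>1\<^sup>-\<^sup>q))\<close> for \<open>w \<noteq> 0\<close> and
  \<open>W(0) = \<chi>(G 0) + (q - 1) S\<close>, where \<open>S = \<Sum>y\<in>U. \<chi>(G y)\<close>; so the function is bent
  as soon as \<open>S = \<chi>(G 0)\<close>.

  As \<open>2 \<chi>(maj(t\<^sub>1, t\<^sub>2, t\<^sub>3)) = \<chi> t\<^sub>1 + \<chi> t\<^sub>2 + \<chi> t\<^sub>3 - \<chi>(t\<^sub>1 + t\<^sub>2 + t\<^sub>3)\<close>,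
  \<open>2 S\<close> is a signed sum of the four sums \<open>\<Lambda>(a) = \<Sum>y\<in>U. \<chi>(Tr(a / (y + b)))\<close>
  with \<open>a = a\<^sub>1, a\<^sub>2, a\<^sub>3, a\<^sub>1 + a\<^sub>2 + a\<^sub>3\<close>. For \<open>b \<in> U\<close> the Moebius map
  \<open>y \<mapsto> b / (y + b)\<close> sends \<open>U - {b}\<close> onto a coset of \<open>F\<^sub>q\<close>, so \<open>\<Lambda>(a)\<close> is
  \<open>1 + q \<chi>(Tr\<^sub>1\<^sup>n(a b\<^sup>q))\<close> if \<open>a b\<^sup>q \<in> F\<^sub>q\<close> and \<open>1\<close> otherwise. For \<open>b \<notin> U\<close>
  another Moebius map permutes \<open>U\<close>, and detecting \<open>U\<close> by a character sum over \<open>F\<^sub>q\<close>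
  followed by completing the square in a Gauss sum over the norm form turns \<open>\<Lambda>(a)\<close> into a
  Kloosterman sum. Each of the six conditions is what makes \<open>S = \<chi>(G 0)\<close>.
\<close>

declare One_nat_def [simp del] \<comment> \<open>otherwise the simplifier turns \<open>tr 1\<close> into \<open>tr (Suc 0)\<close>\<close>

definition is_bit :: "'a::zero_neq_one \<Rightarrow> bool" where
  "is_bit x \<longleftrightarrow> x = 0 \<or> x = 1"

definition maj3 :: "'a::comm_ring_1 \<Rightarrow> 'a \<Rightarrow> 'a \<Rightarrow> 'a" where
  "maj3 x y z = x * y + x * z + y * z"

lemma is_bit_square: "(t::'a::field)^2 = t \<Longrightarrow> is_bit t"
proof -
  assume "t^2 = t"
  hence "t * (t - 1) = 0" by (simp add: power2_eq_square algebra_simps)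
  thus "is_bit t" by (auto simp: is_bit_def)
qed

lemma chi_times_self [simp]: "chi x * chi x = 1"
  by (simp add: chi_def)

lemma chi_zero [simp]: "chi 0 = 1"
  by (simp add: chi_def)

lemma chi_one [simp]: "chi (1::'a::zero_neq_one) = -1"
  by (simp add: chi_def)

lemma of_nat_card_UNIV_eq_0: "of_nat (card (UNIV :: 'a::{ring_1,finite} set)) = (0::'a)"
proof -
  have "(\<Sum>x\<in>UNIV. x + 1) = (\<Sum>x\<in>UNIV. (x::'a))"
    by (rule sum.reindex_bij_witness[of _ "\<lambda>x. x - 1" "\<lambda>x. x + 1"]) auto
  thus ?thesis by (simp add: sum.distrib)
qed

lemma power_card_UNIV_eq_self: "(x::'a::{field,finite}) ^ card (UNIV :: 'a set) = x"
proof (cases "x = 0")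
  case False
  let ?N = "UNIV - {0::'a}"
  have "(\<Prod>y\<in>?N. x * y) = (\<Prod>y\<in>?N. y)"
    by (rule prod.reindex_bij_witness[of _ "\<lambda>y. y / x" "\<lambda>y. x * y"]) (use False in auto)
  hence "x ^ card ?N = 1" by (simp add: prod.distrib)
  hence "x ^ Suc (card ?N) = x" by (simp only: power_Suc mult_1_right)
  moreover have "card (UNIV :: 'a set) = Suc (card ?N)"
    by (simp add: card_Diff_subset finite_UNIV_card_ge_0 Suc_diff_le)
  ultimately show ?thesis by (simp only:)
qed (simp add: finite_UNIV_card_ge_0)

lemma card_roots_power_le:
  assumes "k \<ge> 1" shows "card {x::'a::idom. x^k = c} \<le> k"
proof -
  define p where "p = monom (1::'a) k - [:c:]"
  have "coeff p k = 1" using assms by (cases k) (simp_all add: p_def)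
  hence "p \<noteq> 0" by auto
  moreover have "degree p \<le> k" unfolding p_def
    by (intro degree_diff_le degree_monom_le) auto
  moreover have "{x::'a. x^k = c} = {x. poly p x = 0}" by (simp add: p_def poly_monom)
  ultimately show ?thesis using card_poly_roots_bound[of p] by simp
qed

lemma card_tr_eq_0_le:
  assumes "m \<ge> 1" shows "card {x::'a::idom. tr 1 m x = 0} \<le> 2^(m-1)"
proof -
  define p where "p = (\<Sum>i<m. monom (1::'a) (2^i))"
  have "coeff p (2^(m-1)) = (\<Sum>i<m. if i = m - 1 then 1 else 0)"
    unfolding p_def coeff_sum coeff_monom by (intro sum.cong refl) (simp add: power_inject_exp)
  also have "\<dots> = 1" using assms by (subst sum.delta) auto
  finally have "p \<noteq> 0" by auto
  moreover have "degree p \<le> 2^(m-1)" unfolding p_def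
    by (intro degree_sum_le) (auto intro!: order.trans[OF degree_monom_le] power_increasing)
  moreover have "{x::'a. tr 1 m x = 0} = {x. poly p x = 0}"
    by (simp add: p_def poly_sum poly_monom tr_def)
  ultimately show ?thesis using card_poly_roots_bound[of p] by simp
qed

lemma card_power_fibre_eq:
  assumes "x0 \<noteq> (0::'a::field)"
  shows "card {x. x \<noteq> 0 \<and> x^k = x0^k} = card {x::'a. x \<noteq> 0 \<and> x^k = 1}"
  by (rule bij_betw_same_card[of "\<lambda>x. x / x0"], rule bij_betw_byWitness[of _ "\<lambda>x. x0 * x"])
     (use assms in \<open>auto simp: power_divide power_mult_distrib\<close>)

lemma card_nonzero_eq_image_power_times_roots:
  "card (UNIV - {0::'a::{field,finite}}) =
     card ((\<lambda>x. x^k) ` (UNIV - {0::'a})) * card {x::'a. x \<noteq> 0 \<and> x^k = 1}"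
proof -
  let ?N = "UNIV - {0::'a}"
  have "card ?N = (\<Sum>y\<in>(\<lambda>x. x^k) ` ?N. card {x. x \<in> ?N \<and> x^k = y})"
    using card_eq_sum sum.image_gen[of ?N "\<lambda>_. 1::nat" "\<lambda>x. x^k"] by simp
  also have "\<dots> = (\<Sum>y\<in>(\<lambda>x. x^k) ` ?N. card {x::'a. x \<noteq> 0 \<and> x^k = 1})"
  proof (rule sum.cong[OF refl])
    fix y assume "y \<in> (\<lambda>x. x^k) ` ?N"
    then obtain x0 where "x0 \<noteq> 0" "y = x0^k" by auto
    then show "card {x. x \<in> ?N \<and> x^k = y} = card {x::'a. x \<noteq> 0 \<and> x^k = 1}"
      using card_power_fibre_eq[of x0 k] by simp
  qed
  also have "\<dots> = card ((\<lambda>x. x^k) ` ?N) * card {x::'a. x \<noteq> 0 \<and> x^k = 1}"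
    by simp
  finally show ?thesis .
qed

lemma sum_comp_const_fibres:
  assumes "finite A" "f ` A = B" "\<And>y. y \<in> B \<Longrightarrow> card {x \<in> A. f x = y} = k"
  shows "(\<Sum>x\<in>A. g (f x)) = of_nat k * (\<Sum>y\<in>B. g y :: 'c::comm_semiring_1)"
proof -
  have "(\<Sum>x\<in>A. g (f x)) = (\<Sum>y\<in>B. \<Sum>x | x \<in> A \<and> f x = y. g (f x))"
    unfolding assms(2)[symmetric] by (rule sum.image_gen[OF assms(1)])
  also have "\<dots> = (\<Sum>y\<in>B. of_nat k * g y)"
    by (intro sum.cong refl) (simp add: assms(3))
  finally show ?thesis by (simp add: sum_distrib_left)
qed

lemma factors_eq_of_mult_ge:
  fixes a b A B :: nat
  assumes "a \<le> A" "b \<le> B" "A * B \<le> a * b" "0 < A" "0 < B"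
  shows "a = A" "b = B"
proof -
  have "a * b \<le> A * b" "A * b \<le> A * B" using assms(1,2) by simp_all
  hence "a * b = A * b" "A * b = A * B" using assms(3) by linarith+
  moreover have "0 < b" using assms by (auto intro: ccontr)
  ultimately show "a = A" "b = B" using assms(4) by simp_all
qed

section \<open>Fields of characteristic two\<close>

locale char_two =
  fixes field_type :: "'a::field itself"
  assumes two_eq_zero [simp]: "(2::'a) = 0"
begin

lemma add_self [simp]: "(x::'a) + x = 0"
proof -
  have "x + x = 2 * x" by simp
  thus ?thesis by simp
qed

lemma add_eq_0_iff_eq: "(x::'a) + y = 0 \<longleftrightarrow> x = y"
  by (metis add_self add_right_cancel)

lemma add_cancel_left [simp]: "(x::'a) + (x + y) = y"
  by (metis add.assoc add_self add_0_left)

lemma power2_add: "((x::'a) + y)^2 = x^2 + y^2"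
  by (simp add: power2_sum)

lemma frobenius_add: "((x::'a) + y)^(2^k) = x^(2^k) + y^(2^k)"
proof (induction k)
  case (Suc k)
  have "(x + y)^(2^Suc k) = ((x + y)^(2^k))^2" by (simp add: power_mult[symmetric] mult.commute)
  also have "\<dots> = x^(2^Suc k) + y^(2^Suc k)"
    by (simp add: Suc power2_add power_mult[symmetric] mult.commute)
  finally show ?case .
qed simp

lemma frobenius_sum: "(\<Sum>i\<in>A. f i :: 'a)^(2^k) = (\<Sum>i\<in>A. f i ^ (2^k))"
  by (induction A rule: infinite_finite_induct) (simp_all add: frobenius_add)

lemma is_bit_add: "is_bit (x::'a) \<Longrightarrow> is_bit y \<Longrightarrow> is_bit (x + y)"
  by (auto simp: is_bit_def)

lemma is_bit_mult: "is_bit (x::'a) \<Longrightarrow> is_bit y \<Longrightarrow> is_bit (x * y)"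
  by (auto simp: is_bit_def)

lemma chi_add: "is_bit (x::'a) \<Longrightarrow> is_bit y \<Longrightarrow> chi (x + y) = chi x * chi y"
  by (auto simp: is_bit_def chi_def)

lemma chi_add_eq_1: "is_bit (x::'a) \<Longrightarrow> is_bit y \<Longrightarrow> x + y = 1 \<Longrightarrow> chi x + chi y = 0"
  by (auto simp: is_bit_def)

lemma chi_maj3:
  assumes "is_bit (x::'a)" "is_bit y" "is_bit z"
  shows "2 * chi (maj3 x y z) = chi x + chi y + chi z - chi (x + y + z)"
  using assms unfolding is_bit_def maj3_def by (elim disjE) (simp_all add: add.assoc)

lemma tr_1_eq: "tr 1 m x = (\<Sum>i<m. x^(2^i))"
  by (simp add: tr_def)

lemma tr_add: "tr 1 m ((x::'a) + y) = tr 1 m x + tr 1 m y"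
  by (simp add: tr_1_eq frobenius_add sum.distrib)

lemma tr_zero [simp]: "tr 1 m (0::'a) = 0"
  by (simp add: tr_1_eq power_0_left)

lemma tr_square: "(tr 1 m (x::'a))^2 = tr 1 m x + x + x^(2^m)"
proof -
  have "(tr 1 m x)^2 = (\<Sum>i<m. x^(2^Suc i))"
    using frobenius_sum[of "\<lambda>i. x^(2^i)" "{..<m}" 1]
    by (simp add: tr_1_eq power_mult[symmetric] mult.commute)
  also have "\<dots> = x + (\<Sum>i<Suc m. x^(2^i))"
    by (subst sum.lessThan_Suc_shift) simp
  also have "\<dots> = tr 1 m x + x + x^(2^m)" by (simp add: tr_1_eq add_ac)
  finally show ?thesis .
qed

lemma is_bit_tr: "(x::'a)^(2^m) = x \<Longrightarrow> is_bit (tr 1 m x)"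
  by (rule is_bit_square) (simp only: tr_square add.assoc add_self add_0_right)

lemma sum_chi_additive_eq_0:
  fixes S :: "'a set"
  assumes "finite S" "\<And>x y. x \<in> S \<Longrightarrow> y \<in> S \<Longrightarrow> x + y \<in> S" "d \<in> S"
    and "\<And>x. x \<in> S \<Longrightarrow> is_bit (T x)" "\<And>x y. T (x + y) = T x + (T y :: 'a)" "T d = 1"
  shows "(\<Sum>x\<in>S. chi (T x)) = 0"
proof -
  have "(\<Sum>x\<in>S. chi (T x)) = (\<Sum>x\<in>S. chi (T (x + d)))"
    by (rule sum.reindex_bij_witness[of _ "\<lambda>x. x + d" "\<lambda>x. x + d"])
       (use assms(2,3) in \<open>auto simp: add.assoc\<close>)
  also have "\<dots> = (\<Sum>x\<in>S. - chi (T x))"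
    by (intro sum.cong refl) (use assms(4-6) in \<open>auto simp: is_bit_def chi_def add_eq_0_iff_eq\<close>)
  finally show ?thesis by (simp add: sum_negf)
qed

end

section \<open>The field of order \<open>4^n\<close>\<close>

locale binary_quadratic_field =
  fixes n :: nat and field_type :: "'a::{field,finite} itself"
  assumes n_pos: "0 < n" and card_UNIV: "card (UNIV :: 'a set) = 2^(2*n)"

sublocale binary_quadratic_field \<subseteq> char_two field_type
  by unfold_locales (use of_nat_card_UNIV_eq_0[where 'a='a] card_UNIV in simp)

context binary_quadratic_field
begin

lemma power_card_eq_self: "(x::'a)^(2^(2*n)) = x"
  using power_card_UNIV_eq_self[of x] by (simp add: card_UNIV)

lemma cj_add: "cj n ((x::'a) + y) = cj n x + cj n y"
  by (simp add: cj_def frobenius_add)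

lemma cj_mult: "cj n ((x::'a) * y) = cj n x * cj n y"
  by (simp add: cj_def power_mult_distrib)

lemma cj_divide: "cj n ((x::'a) / y) = cj n x / cj n y"
  by (simp add: cj_def power_divide)

lemma cj_0 [simp]: "cj n (0::'a) = 0"
  by (simp add: cj_def)

lemma cj_1 [simp]: "cj n (1::'a) = 1"
  by (simp add: cj_def)

lemma cj_cj [simp]: "cj n (cj n (x::'a)) = x"
proof -
  have "cj n (cj n x) = x^(2^n * 2^n)" by (simp add: cj_def power_mult)
  also have "(2::nat)^n * 2^n = 2^(2*n)" by (simp add: power_add[symmetric] mult_2)
  finally show ?thesis by (simp add: power_card_eq_self)
qed

lemma cj_eq_0_iff [simp]: "cj n (x::'a) = 0 \<longleftrightarrow> x = 0"
  by (simp add: cj_def)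

lemma norm_eq_power: "(x::'a) * cj n x = x^(2^n + 1)"
  by (simp add: cj_def power_add)

lemma Fq_iff_cj: "x \<in> Fq n \<longleftrightarrow> cj n (x::'a) = x"
  by (simp add: Fq_def cj_def)

lemma Fq_iff_add_cj: "x \<in> Fq n \<longleftrightarrow> (x::'a) + cj n x = 0"
  by (auto simp: Fq_iff_cj add_eq_0_iff_eq)

lemma Fq_add: "x \<in> Fq n \<Longrightarrow> y \<in> Fq n \<Longrightarrow> (x::'a) + y \<in> Fq n"
  by (simp add: Fq_iff_cj cj_add)

lemma Fq_mult: "x \<in> Fq n \<Longrightarrow> y \<in> Fq n \<Longrightarrow> (x::'a) * y \<in> Fq n"
  by (simp add: Fq_iff_cj cj_mult)

lemma Fq_divide: "x \<in> Fq n \<Longrightarrow> y \<in> Fq n \<Longrightarrow> (x::'a) / y \<in> Fq n"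
  by (simp add: Fq_iff_cj cj_divide)

lemma Fq_0 [simp]: "(0::'a) \<in> Fq n"
  by (simp add: Fq_iff_cj)

lemma Fq_1 [simp]: "(1::'a) \<in> Fq n"
  by (simp add: Fq_iff_cj)

lemma norm_in_Fq: "(x::'a) * cj n x \<in> Fq n"
  by (simp add: Fq_iff_cj cj_mult mult.commute)

lemma trace_in_Fq: "(x::'a) + cj n x \<in> Fq n"
  by (simp add: Fq_iff_cj cj_add add.commute)

lemma tr_n_2n_eq: "tr n (2*n) (x::'a) = x + cj n x"
proof -
  have "2*n div n = 2" using n_pos by simp
  thus ?thesis by (simp add: tr_def cj_def numeral_2_eq_2 One_nat_def)
qed

lemma tr_n_2n_eq_0_iff: "tr n (2*n) (x::'a) = 0 \<longleftrightarrow> x \<in> Fq n"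
  by (simp add: tr_n_2n_eq Fq_iff_add_cj)

lemma tr_2n_mult_Fq:
  assumes "l \<in> Fq n"
  shows "tr 1 (2*n) (l * (z::'a)) = tr 1 n (l * (z + cj n z))"
proof -
  let ?f = "\<lambda>i. (l * z)^(2^i)"
  have shift: "?f (i + n) = (l * cj n z)^(2^i)" for i
  proof -
    have "?f (i + n) = ((l * z)^(2^n))^(2^i)" by (simp add: power_add power_mult[symmetric] mult.commute)
    also have "(l * z)^(2^n) = l * cj n z" using assms by (simp add: power_mult_distrib Fq_def cj_def)
    finally show ?thesis .
  qed
  have "tr 1 (2*n) (l * z) = (\<Sum>i=0..<n. ?f i) + (\<Sum>i=n..<n+n. ?f i)"
    by (simp add: tr_1_eq mult_2 lessThan_atLeast0 sum.atLeastLessThan_concat)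
  also have "(\<Sum>i=n..<n+n. ?f i) = (\<Sum>i=0..<n. ?f (i + n))"
    using sum.shift_bounds_nat_ivl[of ?f 0 n n] by simp
  finally show ?thesis
    by (simp add: shift tr_1_eq lessThan_atLeast0 distrib_left frobenius_add sum.distrib)
qed

lemma tr_2n_eq: "tr 1 (2*n) (z::'a) = tr 1 n (z + cj n z)"
  using tr_2n_mult_Fq[of 1 z] by simp

lemma tr_2n_cj: "tr 1 (2*n) (cj n (x::'a)) = tr 1 (2*n) x"
  by (simp add: tr_2n_eq add.commute)

lemma tr_2n_Fq: "x \<in> Fq n \<Longrightarrow> tr 1 (2*n) (x::'a) = 0"
  using tr_2n_mult_Fq[of x 1] by (simp add: Fq_def)

lemma is_bit_tr_2n: "is_bit (tr 1 (2*n) (x::'a))"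
  by (rule is_bit_tr) (simp add: power_card_eq_self)

lemma is_bit_tr_Fq: "x \<in> Fq n \<Longrightarrow> is_bit (tr 1 n (x::'a))"
  by (rule is_bit_tr) (simp add: Fq_def)

lemma tr_Fq_square:
  assumes "x \<in> Fq n" shows "tr 1 n ((x::'a)^2) = tr 1 n x"
proof -
  have "tr 1 n (x^2) = (tr 1 n x)^2"
    using frobenius_sum[of "\<lambda>i. x^(2^i)" "{..<n}" 1]
    by (simp add: tr_1_eq power_mult[symmetric] mult.commute)
  also have "\<dots> = tr 1 n x" using is_bit_tr_Fq[OF assms] by (auto simp: is_bit_def)
  finally show ?thesis .
qed

lemma unit_circle_iff: "(y::'a) \<in> unit_circle n \<longleftrightarrow> y * cj n y = 1"
  by (simp add: unit_circle_def norm_eq_power)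

lemma unit_circle_nonzero: "y \<in> unit_circle n \<Longrightarrow> (y::'a) \<noteq> 0"
  by (auto simp: unit_circle_iff)

lemma cj_unit_circle: "y \<in> unit_circle n \<Longrightarrow> cj n (y::'a) = 1 / y"
  by (metis unit_circle_iff unit_circle_nonzero nonzero_eq_divide_eq mult.commute)

lemma two_le_q: "2 \<le> (2::nat)^n"
  using power_increasing[of 1 n "2::nat"] n_pos by simp

lemma q_square_minus_1: "(2::nat)^(2*n) - 1 = (2^n - 1) * (2^n + 1)"
proof -
  have "(2::nat)^(2*n) = 2^n * 2^n" by (simp add: mult_2 power_add)
  thus ?thesis by (simp add: algebra_simps diff_mult_distrib2 diff_mult_distrib)
qed

lemma power_q_square_minus_1:
  assumes "(x::'a) \<noteq> 0" shows "x^(2^(2*n) - 1) = 1"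
proof -
  have "x * x^(2^(2*n) - 1) = x * 1"
    by (simp add: power_Suc[symmetric] power_card_eq_self)
  thus ?thesis using assms by simp
qed

lemma roots_power_q_minus_1: "{x::'a. x \<noteq> 0 \<and> x^(2^n - 1) = 1} = Fq n - {0}"
proof -
  have "x^(2^n) = x * x^(2^n - 1)" for x :: 'a
    using two_le_q by (simp add: power_Suc[symmetric])
  thus ?thesis by (auto simp: Fq_def)
qed

lemma unit_circle_eq: "unit_circle n = {x::'a. x \<noteq> 0 \<and> x^(2^n + 1) = 1}"
  by (auto simp: unit_circle_def power_add)

lemma power_q_minus_1_in_unit_circle:
  assumes "(x::'a) \<noteq> 0" shows "x^(2^n - 1) \<in> unit_circle n"
proof -
  have "(x^(2^n - 1))^(2^n + 1) = x^(2^(2*n) - 1)" by (simp add: power_mult[symmetric] q_square_minus_1)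
  thus ?thesis using power_q_square_minus_1[OF assms] by (simp add: unit_circle_def)
qed

lemma power_q_plus_1_in_Fq: "(x::'a) \<noteq> 0 \<Longrightarrow> x^(2^n + 1) \<in> Fq n - {0}"
  using norm_in_Fq[of x] by (simp add: norm_eq_power)

lemma card_nonzero: "card (UNIV - {0::'a}) = (2^n - 1) * (2^n + 1)"
  using card_UNIV q_square_minus_1 by (simp add: card_Diff_subset)

text \<open>\<open>x \<mapsto> x^(q-1)\<close> maps the \<open>(q-1)(q+1)\<close> nonzero elements into \<open>U\<close> with kernel
  \<open>Fq n - {0}\<close>; the root-count bounds \<open>q - 1\<close> and \<open>q + 1\<close> on these two sets are therefore sharp.\<close>

lemma
  shows card_Fq_nonzero: "card (Fq n - {0::'a}) = 2^n - 1"
    and card_unit_circle: "card (unit_circle n :: 'a set) = 2^n + 1"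
proof -
  let ?N = "UNIV - {0::'a}"
  have "(2^n - 1) * (2^n + 1) = card ?N" by (rule card_nonzero[symmetric])
  also have "\<dots> = card ((\<lambda>x. x^(2^n - 1)) ` ?N) * card (Fq n - {0::'a})"
    by (rule card_nonzero_eq_image_power_times_roots[where 'a='a, of "2^n - 1",
          unfolded roots_power_q_minus_1])
  also have "\<dots> \<le> card (unit_circle n :: 'a set) * card (Fq n - {0::'a})"
    using power_q_minus_1_in_unit_circle by (intro mult_le_mono1 card_mono) auto
  finally have "(2^n + 1) * (2^n - 1) \<le> card (unit_circle n :: 'a set) * card (Fq n - {0::'a})"
    by (simp add: mult.commute)
  moreover have "card (Fq n - {0::'a}) \<le> 2^n - 1"
  proof -
    have "card (Fq n - {0::'a}) \<le> card {x::'a. x^(2^n - 1) = 1}"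
      unfolding roots_power_q_minus_1[symmetric] by (intro card_mono) auto
    also have "\<dots> \<le> 2^n - 1" using two_le_q by (intro card_roots_power_le) auto
    finally show ?thesis .
  qed
  moreover have "card (unit_circle n :: 'a set) \<le> 2^n + 1"
    unfolding unit_circle_def by (intro card_roots_power_le) auto
  ultimately show "card (Fq n - {0::'a}) = 2^n - 1" "card (unit_circle n :: 'a set) = 2^n + 1"
    using factors_eq_of_mult_ge[of "card (unit_circle n :: 'a set)" "2^n + 1"
        "card (Fq n - {0::'a})" "2^n - 1"] two_le_q by auto
qed

lemma image_power_q_minus_1: "(\<lambda>x. x^(2^n - 1)) ` (UNIV - {0::'a}) = unit_circle n"
proof (rule card_subset_eq)
  have "card (UNIV - {0::'a}) = card ((\<lambda>x. x^(2^n - 1)) ` (UNIV - {0::'a})) * card (Fq n - {0::'a})"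
    by (rule card_nonzero_eq_image_power_times_roots[where 'a='a, of "2^n - 1",
          unfolded roots_power_q_minus_1])
  hence "(2^n - 1) * (2^n + 1) = card ((\<lambda>x. x^(2^n - 1)) ` (UNIV - {0::'a})) * (2^n - 1)"
    by (simp only: card_nonzero card_Fq_nonzero)
  thus "card ((\<lambda>x. x^(2^n - 1)) ` (UNIV - {0::'a})) = card (unit_circle n :: 'a set)"
    using two_le_q card_unit_circle by simp
qed (use power_q_minus_1_in_unit_circle in auto)

lemma image_power_q_plus_1: "(\<lambda>x. x^(2^n + 1)) ` (UNIV - {0::'a}) = Fq n - {0}"
proof (rule card_subset_eq)
  have "card (UNIV - {0::'a}) = card ((\<lambda>x. x^(2^n + 1)) ` (UNIV - {0::'a})) * card (unit_circle n :: 'a set)"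
    by (rule card_nonzero_eq_image_power_times_roots[where 'a='a, of "2^n + 1",
          folded unit_circle_eq])
  hence "(2^n - 1) * (2^n + 1) = card ((\<lambda>x. x^(2^n + 1)) ` (UNIV - {0::'a})) * (2^n + 1)"
    by (simp only: card_nonzero card_unit_circle)
  thus "card ((\<lambda>x. x^(2^n + 1)) ` (UNIV - {0::'a})) = card (Fq n - {0::'a})"
    using card_Fq_nonzero by simp
qed (use power_q_plus_1_in_Fq in auto)

lemma card_Fq: "card (Fq n :: 'a set) = 2^n"
proof -
  have "Suc (card (Fq n - {0::'a})) = card (Fq n :: 'a set)"
    by (rule card_Suc_Diff1) auto
  thus ?thesis using card_Fq_nonzero two_le_q by linarith
qed

lemma card_fibre_power_q_minus_1:
  assumes "y \<in> unit_circle n"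
  shows "card {x::'a. x \<noteq> 0 \<and> x^(2^n - 1) = y} = 2^n - 1"
proof -
  obtain x0 where "x0 \<noteq> 0" "y = x0^(2^n - 1)"
    using assms image_power_q_minus_1 by blast
  thus ?thesis using card_power_fibre_eq[of x0] roots_power_q_minus_1 card_Fq_nonzero by simp
qed

lemma card_fibre_power_q_plus_1:
  assumes "t \<in> Fq n - {0}"
  shows "card {x::'a. x \<noteq> 0 \<and> x^(2^n + 1) = t} = 2^n + 1"
proof -
  obtain x0 where "x0 \<noteq> 0" "t = x0^(2^n + 1)"
    using assms image_power_q_plus_1 by blast
  thus ?thesis using card_power_fibre_eq[of x0] unit_circle_eq card_unit_circle by simp
qed

section \<open>Additive character sums\<close>

lemma exists_tr_eq_1:
  assumes "m \<ge> 1" "card S = 2^m" "\<And>x. x \<in> S \<Longrightarrow> (x::'a)^(2^m) = x"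
  shows "\<exists>d\<in>S. tr 1 m d = 1"
proof (rule ccontr)
  assume "\<not> ?thesis"
  hence "S \<subseteq> {x::'a. tr 1 m x = 0}" using assms(3) is_bit_tr by (auto simp: is_bit_def)
  hence "card S \<le> card {x::'a. tr 1 m x = 0}" by (intro card_mono) auto
  also have "\<dots> \<le> 2^(m-1)" using assms(1) by (rule card_tr_eq_0_le)
  also have "\<dots> < 2^m" using assms(1) by simp
  finally show False using assms(2) by simp
qed

lemma sum_chi_tr_Fq:
  assumes "c \<in> Fq n"
  shows "(\<Sum>l\<in>Fq n. chi (tr 1 n (l * (c::'a)))) = (if c = 0 then 2^n else 0)"
proof (cases "c = 0")
  case False
  have "(\<Sum>l\<in>Fq n. chi (tr 1 n (l * c))) = (\<Sum>l\<in>Fq n. chi (tr 1 n (l::'a)))"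
    by (rule sum.reindex_bij_witness[of _ "\<lambda>l. l / c" "\<lambda>l. l * c"])
       (use False assms in \<open>auto simp: Fq_mult Fq_divide\<close>)
  also have "\<dots> = 0"
  proof -
    have "\<exists>d\<in>Fq n. tr 1 n (d::'a) = 1"
      using n_pos by (intro exists_tr_eq_1[OF _ card_Fq]) (simp_all add: Fq_def)
    then obtain d where "d \<in> Fq n" "tr 1 n (d::'a) = 1" by blast
    thus ?thesis by (intro sum_chi_additive_eq_0[of _ d]) (auto simp: Fq_add is_bit_tr_Fq tr_add)
  qed
  finally show ?thesis using False by simp
qed (simp add: card_Fq)

lemma sum_chi_tr_2n:
  "(\<Sum>x\<in>UNIV. chi (tr 1 (2*n) (c * (x::'a)))) = (if c = 0 then 2^(2*n) else 0)"
proof (cases "c = 0")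
  case False
  have "(\<Sum>x\<in>UNIV. chi (tr 1 (2*n) (c * x))) = (\<Sum>x\<in>UNIV. chi (tr 1 (2*n) (x::'a)))"
    by (rule sum.reindex_bij_witness[of _ "\<lambda>x. x / c" "\<lambda>x. c * x"]) (use False in auto)
  also have "\<dots> = 0"
  proof -
    have "\<exists>d\<in>UNIV. tr 1 (2*n) (d::'a) = 1"
      using n_pos by (intro exists_tr_eq_1[OF _ card_UNIV power_card_eq_self]) simp
    then obtain d where "tr 1 (2*n) (d::'a) = 1" by blast
    thus ?thesis by (intro sum_chi_additive_eq_0[of _ d]) (auto simp: is_bit_tr_2n tr_add)
  qed
  finally show ?thesis using False by simp
qed (simp add: card_UNIV)

lemma sum_chi_tr_2n_Fq:
  "(\<Sum>l\<in>Fq n. chi (tr 1 (2*n) (l * (z::'a)))) = (if z \<in> Fq n then 2^n else 0)"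
proof -
  have "(\<Sum>l\<in>Fq n. chi (tr 1 (2*n) (l * z))) = (\<Sum>l\<in>Fq n. chi (tr 1 n (l * (z + cj n z))))"
    by (intro sum.cong refl) (simp add: tr_2n_mult_Fq)
  also have "\<dots> = (if z + cj n z = 0 then 2^n else 0)" by (rule sum_chi_tr_Fq[OF trace_in_Fq])
  finally show ?thesis by (simp add: Fq_iff_add_cj)
qed

section \<open>A bentness criterion\<close>

lemma int_q_minus_1: "int (2^n - 1) = 2^n - 1"
  using two_le_q by (simp add: of_nat_diff)

lemma sum_chi_tr_2n_Fq_nonzero:
  "(\<Sum>l\<in>Fq n - {0}. chi (tr 1 (2*n) (l * (z::'a)))) = (if z \<in> Fq n then 2^n - 1 else -1)"
proof -
  have "(\<Sum>l\<in>Fq n - {0}. chi (tr 1 (2*n) (l * z))) = (\<Sum>l\<in>Fq n. chi (tr 1 (2*n) (l * z))) - 1"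
    by (subst sum_diff1) auto
  thus ?thesis by (simp add: sum_chi_tr_2n_Fq)
qed

lemma sum_nonzero_power_q_minus_1:
  fixes g :: "'a \<Rightarrow> int"
  shows "(\<Sum>x\<in>UNIV - {0}. g (x^(2^n - 1))) = (2^n - 1) * (\<Sum>y\<in>unit_circle n. g y)"
  using sum_comp_const_fibres[OF _ image_power_q_minus_1, of "2^n - 1" g] card_fibre_power_q_minus_1
  by (simp add: int_q_minus_1)

lemma sum_nonzero_power_q_plus_1:
  fixes g :: "'a \<Rightarrow> int"
  shows "(\<Sum>x\<in>UNIV - {0}. g (x^(2^n + 1))) = (2^n + 1) * (\<Sum>t\<in>Fq n - {0}. g t)"
  using sum_comp_const_fibres[OF _ image_power_q_plus_1, of "2^n + 1" g] card_fibre_power_q_plus_1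
  by simp

lemma sum_line_power_q_minus_1:
  fixes g :: "'a \<Rightarrow> int"
  assumes "w \<noteq> 0"
  shows "(\<Sum>x | x \<noteq> 0 \<and> w * x \<in> Fq n. g (x^(2^n - 1))) = (2^n - 1) * g (inverse w ^ (2^n - 1))"
proof -
  have "(\<Sum>x | x \<noteq> 0 \<and> w * x \<in> Fq n. g (x^(2^n - 1))) =
        (\<Sum>x | x \<noteq> 0 \<and> w * x \<in> Fq n. g (inverse w ^ (2^n - 1)))"
  proof (intro sum.cong refl)
    fix x assume "x \<in> {x. x \<noteq> 0 \<and> w * x \<in> Fq n}"
    hence "w * x \<in> {x. x \<noteq> 0 \<and> x^(2^n - 1) = 1}"
      using assms unfolding roots_power_q_minus_1 by simp
    hence "w^(2^n - 1) * x^(2^n - 1) = 1" by (simp add: power_mult_distrib)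
    hence "inverse (w^(2^n - 1)) = x^(2^n - 1)" by (rule inverse_unique)
    hence "x^(2^n - 1) = inverse w ^ (2^n - 1)" by (simp add: power_inverse)
    thus "g (x^(2^n - 1)) = g (inverse w ^ (2^n - 1))" by simp
  qed
  moreover have "card {x. x \<noteq> 0 \<and> w * x \<in> Fq n} = card (Fq n - {0::'a})"
    by (rule bij_betw_same_card[of "\<lambda>x. w * x"], rule bij_betw_byWitness[of _ "\<lambda>x. x / w"])
       (use assms in \<open>simp_all add: image_subset_iff\<close>)
  ultimately show ?thesis by (simp only: sum_constant card_Fq_nonzero int_q_minus_1)
qed

lemma sum_walsh_nonzero_scaled:
  fixes f :: "'a \<Rightarrow> 'a"
  assumes scale: "\<And>l x. l \<in> Fq n - {0} \<Longrightarrow> f (l * x) = f x"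
  shows "(2^n - 1) * (\<Sum>x\<in>UNIV - {0}. chi (f x) * chi (tr 1 (2*n) (w * x))) =
    2^n * (\<Sum>x | x \<noteq> 0 \<and> w * x \<in> Fq n. chi (f x)) - (\<Sum>x\<in>UNIV - {0}. chi (f x))"
proof -
  let ?N = "UNIV - {0::'a}"
  define R where "R = (\<Sum>x\<in>?N. chi (f x) * chi (tr 1 (2*n) (w * x)))"
  have R_scaled: "R = (\<Sum>x\<in>?N. chi (f x) * chi (tr 1 (2*n) (l * (w * x))))"
    if l: "l \<in> Fq n - {0}" for l
  proof -
    have "R = (\<Sum>x\<in>?N. chi (f (l * x)) * chi (tr 1 (2*n) (w * (l * x))))"
      unfolding R_def by (rule sum.reindex_bij_witness[of _ "\<lambda>x. l * x" "\<lambda>x. x / l"]) (use l in auto)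
    thus ?thesis using l by (simp add: scale mult.left_commute)
  qed
  have "(2^n - 1) * R = (\<Sum>l\<in>Fq n - {0::'a}. R)"
    by (simp only: sum_constant card_Fq_nonzero int_q_minus_1)
  also have "\<dots> = (\<Sum>l\<in>Fq n - {0}. \<Sum>x\<in>?N. chi (f x) * chi (tr 1 (2*n) (l * (w * x))))"
    by (intro sum.cong refl R_scaled)
  also have "\<dots> = (\<Sum>x\<in>?N. chi (f x) * (\<Sum>l\<in>Fq n - {0}. chi (tr 1 (2*n) (l * (w * x)))))"
    by (subst sum.swap) (simp add: sum_distrib_left)
  also have "\<dots> = (\<Sum>x\<in>?N. 2^n * (if w * x \<in> Fq n then chi (f x) else 0) - chi (f x))"
    by (intro sum.cong refl) (simp only: sum_chi_tr_2n_Fq_nonzero, simp add: algebra_simps)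
  also have "\<dots> = 2^n * (\<Sum>x\<in>?N. if w * x \<in> Fq n then chi (f x) else 0) - (\<Sum>x\<in>?N. chi (f x))"
    by (simp add: sum_subtractf sum_distrib_left)
  also have "(\<Sum>x\<in>?N. if w * x \<in> Fq n then chi (f x) else 0) = (\<Sum>x | x \<noteq> 0 \<and> w * x \<in> Fq n. chi (f x))"
    by (simp add: sum.inter_filter[symmetric] conj_commute)
  finally show ?thesis by (simp add: R_def)
qed

lemma walsh_power_q_minus_1:
  fixes G :: "'a \<Rightarrow> 'a"
  assumes bits: "\<And>y. is_bit (G y)"
  defines "S \<equiv> \<Sum>y\<in>unit_circle n. chi (G y)"
  shows "walsh (2*n) (\<lambda>x. G (x^(2^n - 1))) w =
    chi (G 0) - S + 2^n * (if w = 0 then S else chi (G (inverse w ^ (2^n - 1))))"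
proof -
  let ?N = "UNIV - {0::'a}" and ?f = "\<lambda>x::'a. G (x^(2^n - 1))"
  define R where "R = (\<Sum>x\<in>?N. chi (?f x) * chi (tr 1 (2*n) (w * x)))"
  have "walsh (2*n) ?f w = (\<Sum>x\<in>UNIV. chi (?f x) * chi (tr 1 (2*n) (w * x)))"
    unfolding walsh_def by (intro sum.cong refl chi_add bits is_bit_tr_2n)
  also have "\<dots> = chi (?f 0) + R"
    unfolding R_def by (subst sum.remove[of _ 0]) auto
  finally have walsh_eq: "walsh (2*n) ?f w = chi (G 0) + R"
    using two_le_q by (simp add: power_0_left)
  have scale: "?f (l * x) = ?f x" if "l \<in> Fq n - {0}" for l x
  proof -
    have "l^(2^n - 1) = 1" using that unfolding roots_power_q_minus_1[symmetric] by simp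
    thus ?thesis by (simp add: power_mult_distrib)
  qed
  define X where "X = (if w = 0 then S else chi (G (inverse w ^ (2^n - 1))))"
  have line: "(\<Sum>x | x \<noteq> 0 \<and> w * x \<in> Fq n. chi (?f x)) = (2^n - 1) * X"
  proof (cases "w = 0")
    case True
    hence "{x. x \<noteq> 0 \<and> w * x \<in> Fq n} = ?N" by auto
    thus ?thesis using True sum_nonzero_power_q_minus_1[of "\<lambda>y. chi (G y)"] by (simp add: S_def X_def)
  qed (simp add: X_def sum_line_power_q_minus_1[where g = "\<lambda>y. chi (G y)"])
  have "(2^n - 1) * R = 2^n * (\<Sum>x | x \<noteq> 0 \<and> w * x \<in> Fq n. chi (?f x)) - (\<Sum>x\<in>?N. chi (?f x))"
    unfolding R_def by (rule sum_walsh_nonzero_scaled[OF scale])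
  also have "\<dots> = (2^n - 1) * (2^n * X - S)"
    unfolding line sum_nonzero_power_q_minus_1[of "\<lambda>y. chi (G y)"] S_def by (simp add: algebra_simps)
  finally have "(2^n - 1) * R = (2^n - 1) * (2^n * X - S)" .
  moreover have "(2::int)^n - 1 \<noteq> 0"
    using power_increasing[of 1 n "2::int"] n_pos by simp
  ultimately have "R = 2^n * X - S" by simp
  thus ?thesis using walsh_eq by (simp add: X_def)
qed

lemma bent_power_q_minus_1I:
  fixes G :: "'a \<Rightarrow> 'a"
  assumes "\<And>y. is_bit (G y)" and "(\<Sum>y\<in>unit_circle n. chi (G y)) = chi (G 0)"
  shows "bent (2*n) (\<lambda>x. G (x^(2^n - 1)))"
  unfolding bent_def
proof
  fix w :: 'a
  obtain y where "walsh (2*n) (\<lambda>x. G (x^(2^n - 1))) w = 2^n * chi (G y)"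
    using walsh_power_q_minus_1[where G = G and w = w] assms by (cases "w = 0") auto
  hence "(walsh (2*n) (\<lambda>x. G (x^(2^n - 1))) w)\<^sup>2 = 2^n * 2^n * (chi (G y) * chi (G y))"
    by (simp add: power2_eq_square mult_ac)
  also have "\<dots> = 2^(2*n)" by (simp add: mult_2 power_add)
  finally show "(walsh (2*n) (\<lambda>x. G (x^(2^n - 1))) w)\<^sup>2 = 2^(2*n)" .
qed

section \<open>Sums over the unit circle\<close>

lemma exists_add_cj_eq_1: "\<exists>w::'a. w + cj n w = 1"
proof -
  have "card (Fq n :: 'a set) \<noteq> card (UNIV :: 'a set)"
    using n_pos by (simp add: card_Fq card_UNIV)
  hence "Fq n \<noteq> (UNIV :: 'a set)" by metis
  then obtain v :: 'a where v: "v \<notin> Fq n" by auto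
  define D where "D = v + cj n v"
  have D0: "D \<noteq> 0" using v by (simp add: D_def Fq_iff_add_cj)
  have "cj n D = D" by (simp add: D_def cj_add add.commute)
  hence "v / D + cj n (v / D) = (v + cj n v) / D" by (simp add: cj_divide add_divide_distrib)
  also have "\<dots> = 1" using D0 by (simp add: D_def)
  finally show ?thesis by blast
qed

definition trace_one :: 'a where
  "trace_one = (SOME w. w + cj n w = 1)"

lemma trace_one_add_cj: "trace_one + cj n trace_one = 1"
  unfolding trace_one_def using exists_add_cj_eq_1 by (rule someI_ex)

lemma cj_trace_one: "cj n trace_one = trace_one + 1"
  using trace_one_add_cj add_cancel_left[of trace_one "cj n trace_one"] by simp

lemma trace_one_add_Fq_nonzero: "l \<in> Fq n \<Longrightarrow> trace_one + l \<noteq> 0"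
  using trace_one_add_cj by (auto simp: add_eq_0_iff_eq Fq_iff_add_cj)

lemma tr_2n_mult_trace_one: "z \<in> Fq n \<Longrightarrow> tr 1 (2*n) (z * trace_one) = tr 1 n z"
  using tr_2n_mult_Fq[of z trace_one] by (simp add: trace_one_add_cj)

definition circle_sum :: "'a \<Rightarrow> 'a \<Rightarrow> int" where
  "circle_sum b a = (\<Sum>y\<in>unit_circle n. chi (tr 1 (2*n) (a / (y + b))))"

definition subfield_sign :: "'a \<Rightarrow> 'a \<Rightarrow> int" where
  "subfield_sign b a = (if a * cj n b \<in> Fq n then chi (tr 1 n (a * cj n b)) else 0)"

text \<open>For \<open>b \<in> U\<close>, the conjugate of \<open>b / (y + b)\<close> is \<open>y / (y + b) = b / (y + b) + 1\<close>,
  so \<open>y \<mapsto> b / (y + b)\<close> maps \<open>U - {b}\<close> onto the coset \<open>trace_one + Fq n\<close>.\<close>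

lemma mobius_unit_circle_to_Fq:
  assumes b: "b \<in> unit_circle n" and y: "y \<in> unit_circle n - {b}"
  shows "b / (y + b) + trace_one \<in> Fq n"
proof -
  have "y + b \<noteq> 0" "y \<noteq> 0" "b \<noteq> 0"
    using b y unit_circle_nonzero by (auto simp: add_eq_0_iff_eq)
  hence "cj n (b / (y + b)) = y / (y + b)"
    using b y by (simp add: cj_divide cj_add cj_unit_circle field_simps)
  also have "y / (y + b) = b / (y + b) + 1"
    using \<open>y + b \<noteq> 0\<close> by (simp add: field_simps)
  finally show ?thesis by (simp add: Fq_iff_cj cj_add cj_trace_one add_ac)
qed

lemma mobius_Fq_to_unit_circle:
  assumes b: "b \<in> unit_circle n" and l: "l \<in> Fq n"
  shows "1 / (cj n b * (trace_one + l)) + b \<in> unit_circle n - {b}"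
proof -
  define z where "z = cj n b * (trace_one + l)"
  have b0: "b \<noteq> 0" and bb: "b * cj n b = 1" using b unit_circle_nonzero unit_circle_iff by auto
  have u0: "trace_one + l \<noteq> 0" and u1: "trace_one + l + 1 \<noteq> 0"
    using trace_one_add_Fq_nonzero[OF l] trace_one_add_Fq_nonzero[OF Fq_add[OF l Fq_1]]
    by (simp_all add: add.assoc)
  have z0: "z \<noteq> 0" using u0 b0 by (simp add: z_def)
  have bz: "b * z = trace_one + l" by (simp add: z_def mult.assoc[symmetric] bb)
  have "cj n b * cj n z = cj n (b * z)" by (simp add: cj_mult)
  also have "\<dots> = trace_one + l + 1" using l by (simp add: bz cj_add cj_trace_one Fq_iff_cj add_ac)
  finally have cbz: "cj n b * cj n z = trace_one + l + 1" .
  have "1 / z + b = (1 + b * z) / z" and "cj n (1 / z + b) = (1 + cj n b * cj n z) / cj n z"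
    using z0 by (simp_all add: cj_add cj_divide cj_mult field_simps)
  hence "(1 / z + b) * cj n (1 / z + b) = ((1 + b * z) * (1 + cj n b * cj n z)) / (z * cj n z)"
    by simp
  also have "z * cj n z = (b * z) * (cj n b * cj n z)"
    using bb by (simp add: mult_ac)
  also have "(1 + b * z) * (1 + cj n b * cj n z) = (b * z) * (cj n b * cj n z)"
    unfolding bz cbz by (simp add: algebra_simps)
  finally have "(1 / z + b) * cj n (1 / z + b) = 1" using u0 u1 bz cbz by simp
  moreover have "1 / z + b \<noteq> b" using z0 by simp
  ultimately show ?thesis by (simp add: unit_circle_iff z_def)
qed

lemma circle_sum_unit_circle:
  assumes b: "b \<in> unit_circle n"
  shows "circle_sum b a = 1 + 2^n * subfield_sign b a"
proof -
  let ?U = "unit_circle n :: 'a set"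
  have b0: "b \<noteq> 0" and cb: "cj n b = 1 / b" using b unit_circle_nonzero cj_unit_circle by auto
  define z where "z = a * cj n b"
  define h where "h = (\<lambda>l. chi (tr 1 (2*n) (z * trace_one)) * chi (tr 1 (2*n) (l * z)))"
  \<comment> \<open>the term \<open>y = b\<close> is \<open>\<chi>(Tr(a / 0)) = \<chi>(0) = 1\<close>\<close>
  have "circle_sum b a = chi (tr 1 (2*n) (a / (b + b))) + (\<Sum>y\<in>?U - {b}. chi (tr 1 (2*n) (a / (y + b))))"
    unfolding circle_sum_def by (rule sum.remove) (use b in auto)
  also have "(\<Sum>y\<in>?U - {b}. chi (tr 1 (2*n) (a / (y + b)))) = (\<Sum>l\<in>Fq n. h l)"
  proof (rule sum.reindex_bij_witness[of _ "\<lambda>l. 1 / (cj n b * (trace_one + l)) + b"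
        "\<lambda>y. b / (y + b) + trace_one"])
    fix y assume y: "y \<in> ?U - {b}"
    hence yb: "y + b \<noteq> 0" by (auto simp: add_eq_0_iff_eq)
    show "b / (y + b) + trace_one \<in> Fq n" by (rule mobius_unit_circle_to_Fq[OF b y])
    show "1 / (cj n b * (trace_one + (b / (y + b) + trace_one))) + b = y"
      using yb b0 by (simp add: cb add.assoc)
    have "a / (y + b) = z * trace_one + (b / (y + b) + trace_one) * z"
      using b0 by (simp add: z_def cb algebra_simps)
    thus "h (b / (y + b) + trace_one) = chi (tr 1 (2*n) (a / (y + b)))"
      by (simp add: h_def tr_add chi_add is_bit_tr_2n)
  next
    fix l :: 'a assume l: "l \<in> Fq n"
    show "1 / (cj n b * (trace_one + l)) + b \<in> ?U - {b}" by (rule mobius_Fq_to_unit_circle[OF b l])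
    show "b / (1 / (cj n b * (trace_one + l)) + b + b) + trace_one = l"
      using b0 trace_one_add_Fq_nonzero[OF l] by (simp add: cb add.assoc)
  qed
  also have "(\<Sum>l\<in>Fq n. h l) = (if z \<in> Fq n then 2^n * chi (tr 1 n z) else 0)"
    by (simp add: h_def sum_distrib_left[symmetric] sum_chi_tr_2n_Fq tr_2n_mult_trace_one)
  finally show ?thesis by (simp add: subfield_sign_def z_def)
qed

lemma sum_chi_tr_norm:
  assumes mu: "mu \<in> Fq n - {0}"
  shows "(\<Sum>y\<in>UNIV. chi (tr 1 n (mu * (y * cj n (y::'a))))) = - (2^n)"
proof -
  let ?g = "\<lambda>t. chi (tr 1 n (mu * t))"
  have "(\<Sum>y\<in>UNIV. chi (tr 1 n (mu * (y * cj n y)))) = ?g 0 + (\<Sum>y\<in>UNIV - {0}. ?g (y^(2^n + 1)))"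
    by (subst sum.remove[of _ 0]) (simp_all add: norm_eq_power)
  also have "(\<Sum>y\<in>UNIV - {0}. ?g (y^(2^n + 1))) = (2^n + 1) * (\<Sum>t\<in>Fq n - {0}. ?g t)"
    by (rule sum_nonzero_power_q_plus_1)
  also have "(\<Sum>t\<in>Fq n - {0}. ?g t) = (\<Sum>t\<in>Fq n. chi (tr 1 n (t * mu))) - 1"
    by (simp add: sum_diff1 mult.commute)
  also have "(\<Sum>t\<in>Fq n. chi (tr 1 n (t * mu))) = 0"
    using sum_chi_tr_Fq[of mu] mu by simp
  finally show ?thesis by simp
qed

text \<open>Completing the square: the shift \<open>x \<mapsto> x + cj n c / mu\<close> removes the linear term.\<close>

lemma tr_norm_shift:
  assumes mu: "mu \<in> Fq n - {0}" and d: "d = cj n c / mu"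
  shows "tr 1 n (mu * ((y + d) * cj n (y + d))) + tr 1 (2*n) (c * (y + d)) =
    tr 1 n (mu * (y * cj n (y::'a))) + tr 1 n (c * cj n c / mu)"
proof -
  have cd: "cj n d = c / mu" using mu by (simp add: d cj_divide Fq_iff_cj)
  have md: "mu * d = cj n c" and dc: "d * c = c * cj n c / mu" using mu by (simp_all add: d)
  have "mu * ((y + d) * cj n (y + d)) = mu * (y * cj n y) + c * y + (mu * d) * cj n y + d * c"
    using mu by (simp add: cj_add cd field_simps)
  also have "\<dots> = mu * (y * cj n y) + (c * y + cj n (c * y)) + c * cj n c / mu"
    by (simp add: md dc cj_mult add_ac)
  finally have "tr 1 n (mu * ((y + d) * cj n (y + d))) =
      tr 1 n (mu * (y * cj n y)) + tr 1 (2*n) (c * y) + tr 1 n (c * cj n c / mu)"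
    by (simp only: tr_add tr_2n_eq)
  moreover have "tr 1 (2*n) (c * (y + d)) = tr 1 (2*n) (c * y)"
    using mu tr_2n_Fq[of "c * d"] by (simp add: distrib_left tr_add d Fq_divide norm_in_Fq mult.assoc)
  ultimately show ?thesis by (simp add: add_ac)
qed

lemma gauss_sum_norm:
  assumes mu: "mu \<in> Fq n - {0}"
  shows "(\<Sum>x\<in>UNIV. chi (tr 1 n (mu * (x * cj n x)) + tr 1 (2*n) (c * (x::'a)))) =
         - (2^n) * chi (tr 1 n (c * cj n c / mu))"
proof -
  define d where "d = cj n c / mu"
  let ?E = "\<lambda>x. chi (tr 1 n (mu * (x * cj n x)) + tr 1 (2*n) (c * (x::'a)))"
  have "(\<Sum>x\<in>UNIV. ?E x) = (\<Sum>y\<in>UNIV. ?E (y + d))"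
    by (rule sum.reindex_bij_witness[of _ "\<lambda>y. y + d" "\<lambda>y. y + d"]) (auto simp: add.assoc)
  also have "\<dots> = (\<Sum>y\<in>UNIV. chi (tr 1 n (mu * (y * cj n y))) * chi (tr 1 n (c * cj n c / mu)))"
    using mu by (intro sum.cong refl)
      (simp add: tr_norm_shift d_def chi_add is_bit_tr_Fq Fq_mult norm_in_Fq Fq_divide)
  also have "\<dots> = - (2^n) * chi (tr 1 n (c * cj n c / mu))"
    using sum_chi_tr_norm[OF mu] by (simp add: sum_distrib_right[symmetric])
  finally show ?thesis .
qed

lemma sum_Fq_chi_tr_norm_add_1:
  "(\<Sum>mu\<in>Fq n. chi (tr 1 n (mu * (x * cj n x + 1)))) = (if (x::'a) \<in> unit_circle n then 2^n else 0)"
  using sum_chi_tr_Fq[of "x * cj n x + 1"]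
  by (simp add: Fq_add norm_in_Fq add_eq_0_iff_eq unit_circle_iff)

lemma kloost_eq_sum_nonzero:
  "kloost n N = 1 + (\<Sum>mu\<in>Fq n - {0}. chi (tr 1 n (mu + N / (mu::'a))))"
proof -
  have "kloost n N = 1 + (\<Sum>x\<in>Fq n - {0}. chi (tr 1 n (inverse x + N * x)))"
    unfolding kloost_def by (subst sum.remove[of _ 0]) auto
  also have "(\<Sum>x\<in>Fq n - {0}. chi (tr 1 n (inverse x + N * x))) =
      (\<Sum>mu\<in>Fq n - {0}. chi (tr 1 n (mu + N / mu)))"
    by (rule sum.reindex_bij_witness[of _ inverse inverse])
       (auto simp: Fq_def power_inverse divide_inverse add.commute)
  finally show ?thesis .
qed

text \<open>The unit circle is detected by the additive character sum over \<open>Fq n\<close> of the norm form.\<close>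

lemma sum_unit_circle_eq_sum_Fq:
  "2^n * (\<Sum>v\<in>unit_circle n. chi (tr 1 (2*n) (c * v))) =
    (\<Sum>mu\<in>Fq n. chi (tr 1 n mu) *
      (\<Sum>x\<in>UNIV. chi (tr 1 n (mu * (x * cj n x)) + tr 1 (2*n) (c * (x::'a)))))"
proof -
  have "2^n * (\<Sum>v\<in>unit_circle n. chi (tr 1 (2*n) (c * v))) =
      (\<Sum>x\<in>UNIV. if x \<in> unit_circle n then 2^n * chi (tr 1 (2*n) (c * x)) else 0)"
    by (simp add: sum_distrib_left sum.If_cases Int_def)
  also have "\<dots> =
      (\<Sum>x\<in>UNIV. (\<Sum>mu\<in>Fq n. chi (tr 1 n (mu * (x * cj n x + 1)))) * chi (tr 1 (2*n) (c * x)))"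
    by (intro sum.cong refl) (simp add: sum_Fq_chi_tr_norm_add_1)
  also have "\<dots> = (\<Sum>x\<in>UNIV. \<Sum>mu\<in>Fq n. chi (tr 1 n mu) *
      chi (tr 1 n (mu * (x * cj n x)) + tr 1 (2*n) (c * x)))"
    unfolding sum_distrib_right
  proof (intro sum.cong refl)
    fix x mu :: 'a assume mu: "mu \<in> Fq n"
    have "is_bit (tr 1 n (mu * (x * cj n x)))" using mu by (intro is_bit_tr_Fq Fq_mult norm_in_Fq)
    moreover have "is_bit (tr 1 (2*n) (c * x))" by (rule is_bit_tr_2n)
    ultimately show "chi (tr 1 n (mu * (x * cj n x + 1))) * chi (tr 1 (2*n) (c * x)) =
        chi (tr 1 n mu) * chi (tr 1 n (mu * (x * cj n x)) + tr 1 (2*n) (c * x))"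
      using mu by (simp add: distrib_left tr_add chi_add is_bit_tr_Fq is_bit_tr_2n mult_ac)
  qed
  also have "\<dots> = (\<Sum>mu\<in>Fq n. chi (tr 1 n mu) *
      (\<Sum>x\<in>UNIV. chi (tr 1 n (mu * (x * cj n x)) + tr 1 (2*n) (c * x))))"
    by (subst sum.swap) (simp add: sum_distrib_left)
  finally show ?thesis .
qed

lemma sum_unit_circle_chi_tr:
  assumes c0: "c \<noteq> 0"
  shows "(\<Sum>v\<in>unit_circle n. chi (tr 1 (2*n) (c * (v::'a)))) = 1 - kloost n (c * cj n c)"
proof -
  define G where "G = (\<lambda>mu. \<Sum>x\<in>UNIV. chi (tr 1 n (mu * (x * cj n x)) + tr 1 (2*n) (c * (x::'a))))"
  have "2^n * (\<Sum>v\<in>unit_circle n. chi (tr 1 (2*n) (c * v))) = (\<Sum>mu\<in>Fq n. chi (tr 1 n mu) * G mu)"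
    unfolding G_def by (rule sum_unit_circle_eq_sum_Fq)
  also have "\<dots> = (\<Sum>mu\<in>Fq n - {0}. - (2^n) * chi (tr 1 n (mu + c * cj n c / mu)))"
  proof -
    have "G 0 = 0" using sum_chi_tr_2n[of c] c0 by (simp add: G_def)
    moreover have "chi (tr 1 n mu) * G mu = - (2^n) * chi (tr 1 n (mu + c * cj n c / mu))"
      if "mu \<in> Fq n - {0}" for mu
      using that gauss_sum_norm[OF that, of c]
      by (simp add: G_def tr_add chi_add is_bit_tr_Fq Fq_divide norm_in_Fq)
    ultimately show ?thesis by (simp add: sum.remove[of "Fq n" 0])
  qed
  also have "\<dots> = 2^n * (1 - kloost n (c * cj n c))"
    by (simp add: kloost_eq_sum_nonzero sum_distrib_left sum_negf)
  finally show ?thesis by simp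
qed

text \<open>For \<open>b \<notin> U\<close>, \<open>y \<mapsto> (1 + b\<^sup>q y) / (y + b)\<close> permutes \<open>U\<close> and makes \<open>a / (y + b)\<close>
  an affine function of the image point.\<close>

lemma outside_unit_circle_nonzero:
  fixes b y :: 'a
  assumes bU: "b \<notin> unit_circle n" and y: "y \<in> unit_circle n"
  shows "y + b \<noteq> 0" "1 + cj n b * y \<noteq> 0" "1 + b * cj n b \<noteq> (0::'a)" "y \<noteq> 0"
proof -
  show "y + b \<noteq> 0" using bU y by (auto simp: add_eq_0_iff_eq)
  show "y \<noteq> 0" using y unit_circle_nonzero by blast
  show "1 + b * cj n b \<noteq> 0" using bU by (metis add_eq_0_iff_eq unit_circle_iff)
  show "1 + cj n b * y \<noteq> 0"
  proof
    assume "1 + cj n b * y = 0"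
    hence h: "cj n b * y = 1" by (simp add: add_eq_0_iff_eq)
    have cy: "cj n y = 1 / y" using cj_unit_circle[OF y] .
    have "cj n (cj n b * y) = 1" using h by simp
    hence "b * (1 / y) = 1" by (simp add: cj_mult cy)
    hence "b = y" using \<open>y \<noteq> 0\<close> by (simp add: field_simps)
    thus False using bU y by simp
  qed
qed

lemma mobius_outside_add_cj:
  fixes b y :: 'a
  assumes bU: "b \<notin> unit_circle n" and y: "y \<in> unit_circle n"
  shows "(1 + cj n b * y) / (y + b) + cj n b = (1 + b * cj n b) / (y + b)"
proof -
  note f = outside_unit_circle_nonzero[OF bU y]
  have d: "(1 + cj n b * y) / (y + b) * (y + b) = 1 + cj n b * y" using f by simp
  have "((1 + cj n b * y) / (y + b) + cj n b) * (y + b) = 1 + cj n b * y + cj n b * (y + b)"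
    by (simp only: distrib_right d)
  also have "\<dots> = 1 + b * cj n b" by (simp add: algebra_simps add_cancel_left)
  finally show ?thesis using f by (simp add: eq_divide_eq)
qed

lemma mobius_outside_in_unit_circle:
  fixes b y :: 'a
  assumes bU: "b \<notin> unit_circle n" and y: "y \<in> unit_circle n"
  shows "(1 + cj n b * y) / (y + b) \<in> unit_circle n"
proof -
  note f = outside_unit_circle_nonzero[OF bU y]
  have cy: "cj n y = 1 / y" using cj_unit_circle[OF y] .
  have "cj n ((1 + cj n b * y) / (y + b)) = (1 + b * (1/y)) / (1/y + cj n b)"
    by (simp add: cj_divide cj_add cj_mult cy)
  also have "1 + b * (1/y) = (y + b) / y" using f by (simp add: field_simps)
  also have "1/y + cj n b = (1 + cj n b * y) / y" using f by (simp add: field_simps)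
  also have "((y + b) / y) / ((1 + cj n b * y) / y) = (y + b) / (1 + cj n b * y)" using f by simp
  finally show ?thesis using f by (simp add: unit_circle_iff)
qed

lemma mobius_outside_inverse:
  fixes b y :: 'a
  assumes bU: "b \<notin> unit_circle n" and y: "y \<in> unit_circle n"
  shows "(1 + b * ((1 + cj n b * y) / (y + b))) / ((1 + cj n b * y) / (y + b) + cj n b) = y"
proof -
  note f = outside_unit_circle_nonzero[OF bU y]
  have d: "(1 + cj n b * y) / (y + b) * (y + b) = 1 + cj n b * y" using f by simp
  have "(1 + b * ((1 + cj n b * y) / (y + b))) * (y + b) = (y + b) + b * (1 + cj n b * y)"
    by (simp only: distrib_right mult_1_left mult.assoc d)
  also have "\<dots> = y * (1 + b * cj n b)" by (simp add: algebra_simps add_cancel_left)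
  finally have e1: "1 + b * ((1 + cj n b * y) / (y + b)) = y * (1 + b * cj n b) / (y + b)"
    using f by (simp add: eq_divide_eq)
  show ?thesis unfolding e1 mobius_outside_add_cj[OF bU y] using f by simp
qed

lemma cj_notin_unit_circle: "(b::'a) \<notin> unit_circle n \<Longrightarrow> cj n b \<notin> unit_circle n"
  by (simp add: unit_circle_iff mult.commute)

lemma circle_sum_outside:
  assumes bU: "b \<notin> unit_circle n" and a0: "a \<noteq> 0"
  shows "circle_sum b a =
    chi (tr 1 (2*n) (cj n a * b / (1 + b * cj n b))) * (1 - kloost n (a * cj n a / (1 + b^2 * (cj n b)^2)))"
proof -
  let ?U = "unit_circle n :: 'a set"
  define g where "g = 1 + b * cj n b"
  have g0: "g \<noteq> 0" using bU unfolding g_def by (metis add_eq_0_iff_eq unit_circle_iff)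
  have cg: "cj n g = g" by (simp add: g_def cj_add cj_mult mult.commute)
  define psi where "psi = (\<lambda>y. (1 + cj n b * y) / (y + b))"
  define psi' where "psi' = (\<lambda>v. (1 + b * v) / (v + cj n b))"
  define h where "h = (\<lambda>v. chi (tr 1 (2*n) (a * cj n b / g)) * chi (tr 1 (2*n) ((a / g) * v)))"
  have cbU: "cj n b \<notin> ?U" using cj_notin_unit_circle[OF bU] .
  have "circle_sum b a = (\<Sum>v\<in>?U. h v)"
    unfolding circle_sum_def
  proof (rule sum.reindex_bij_witness[of _ psi' psi])
    fix y assume y: "y \<in> ?U"
    show "psi' (psi y) = y" unfolding psi_def psi'_def by (rule mobius_outside_inverse[OF bU y])
    show "psi y \<in> ?U" unfolding psi_def by (rule mobius_outside_in_unit_circle[OF bU y])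
    have "a * cj n b / g + (a / g) * psi y = (a / g) * (psi y + cj n b)" by (simp add: algebra_simps)
    also have "psi y + cj n b = g / (y + b)" unfolding psi_def g_def by (rule mobius_outside_add_cj[OF bU y])
    also have "(a / g) * (g / (y + b)) = a / (y + b)" using g0 by simp
    finally have "a / (y + b) = a * cj n b / g + (a / g) * psi y" by simp
    thus "h (psi y) = chi (tr 1 (2*n) (a / (y + b)))"
      by (simp add: h_def tr_add chi_add is_bit_tr_2n)
  next
    fix v assume v: "v \<in> ?U"
    show "psi (psi' v) = v" unfolding psi_def psi'_def using mobius_outside_inverse[OF cbU v] by simp
    show "psi' v \<in> ?U" unfolding psi'_def using mobius_outside_in_unit_circle[OF cbU v] by simp
  qed
  also have "\<dots> = chi (tr 1 (2*n) (a * cj n b / g)) * (\<Sum>v\<in>?U. chi (tr 1 (2*n) ((a / g) * v)))"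
    by (simp add: h_def sum_distrib_left)
  also have "(\<Sum>v\<in>?U. chi (tr 1 (2*n) ((a / g) * v))) = 1 - kloost n ((a / g) * cj n (a / g))"
    by (rule sum_unit_circle_chi_tr) (use a0 g0 in simp)
  also have "(a / g) * cj n (a / g) = a * cj n a / (1 + b^2 * (cj n b)^2)"
  proof -
    have "g * g = 1 + b^2 * (cj n b)^2"
      by (simp add: g_def power2_add power_mult_distrib flip: power2_eq_square)
    thus ?thesis by (simp add: cj_divide cg)
  qed
  also have "tr 1 (2*n) (a * cj n b / g) = tr 1 (2*n) (cj n a * b / g)"
    using tr_2n_cj[of "a * cj n b / g"] by (simp add: cj_divide cj_mult cg)
  finally show ?thesis by (simp add: g_def)
qed

section \<open>The function \<open>h3\<close>\<close>

definition h3_circle :: "'a \<Rightarrow> 'a \<Rightarrow> 'a \<Rightarrow> 'a \<Rightarrow> 'a \<Rightarrow> 'a" where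
  "h3_circle a1 a2 a3 b y =
     maj3 (tr 1 (2*n) (a1 / (y + b))) (tr 1 (2*n) (a2 / (y + b))) (tr 1 (2*n) (a3 / (y + b)))"

lemma h3_eq_h3_circle: "h3 n a1 a2 a3 b = (\<lambda>x. h3_circle a1 a2 a3 b (x^(2^n - 1)))"
  by (simp add: fun_eq_iff h3_def ff_def h3_circle_def maj3_def)

lemma h3_zero: "h3 n a1 a2 a3 b 0 = h3_circle a1 a2 a3 b 0"
  using two_le_q by (simp add: h3_eq_h3_circle power_0_left)

lemma is_bit_h3_circle: "is_bit (h3_circle a1 a2 a3 b y)"
  unfolding h3_circle_def maj3_def by (intro is_bit_add is_bit_mult is_bit_tr_2n)

lemma sum_chi_h3_circle:
  "2 * (\<Sum>y\<in>unit_circle n. chi (h3_circle a1 a2 a3 b y)) =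
     circle_sum b a1 + circle_sum b a2 + circle_sum b a3 - circle_sum b (a1 + a2 + a3)"
proof -
  have "2 * chi (h3_circle a1 a2 a3 b y) =
      chi (tr 1 (2*n) (a1 / (y + b))) + chi (tr 1 (2*n) (a2 / (y + b))) +
      chi (tr 1 (2*n) (a3 / (y + b))) - chi (tr 1 (2*n) ((a1 + a2 + a3) / (y + b)))" for y
    unfolding h3_circle_def by (simp add: chi_maj3 is_bit_tr_2n add_divide_distrib tr_add)
  thus ?thesis
    by (simp add: circle_sum_def sum_distrib_left sum.distrib sum_subtractf)
qed

definition sign_balanced :: "'a \<Rightarrow> 'a \<Rightarrow> 'a \<Rightarrow> 'a \<Rightarrow> bool" where
  "sign_balanced b a1 a2 a3 \<longleftrightarrow>
     subfield_sign b a1 + subfield_sign b a2 + subfield_sign b a3 = subfield_sign b (a1 + a2 + a3)"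

lemma sum_chi_h3_circle_unit_circle:
  assumes "b \<in> unit_circle n" "sign_balanced b a1 a2 a3" "h3_circle a1 a2 a3 b 0 = 0"
  shows "(\<Sum>y\<in>unit_circle n. chi (h3_circle a1 a2 a3 b y)) = chi (h3_circle a1 a2 a3 b 0)"
proof -
  have "circle_sum b a1 + circle_sum b a2 + circle_sum b a3 - circle_sum b (a1 + a2 + a3) =
      2 + 2^n * (subfield_sign b a1 + subfield_sign b a2 + subfield_sign b a3
        - subfield_sign b (a1 + a2 + a3))"
    using assms(1) by (simp add: circle_sum_unit_circle algebra_simps)
  also have "\<dots> = 2" using assms(2) by (simp add: sign_balanced_def)
  finally show ?thesis using sum_chi_h3_circle[of a1 a2 a3 b] assms(3) by simp
qed

lemma sum_chi_h3_circle_outside: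
  assumes "b \<notin> unit_circle n" "a1 \<noteq> 0" "a2 \<noteq> 0" "a3 \<noteq> 0" "a1 + a2 + a3 \<noteq> 0"
    and "a1 \<noteq> a2" "a1 \<noteq> a3" "a2 \<noteq> a3"
    and "let k = (\<lambda>x. kloost n (x * cj n x / (1 + b\<^sup>2 * (cj n b)\<^sup>2)));
             u = (\<lambda>x. tr 1 (2 * n) (cj n x * b / (1 + b * cj n b)))
         in 2 * chi (h3_circle a1 a2 a3 b 0) =
              2 * chi (u a1 * u a2 + u a1 * u a3 + u a2 * u a3)
              + chi (u (a1 + a2 + a3)) * k (a1 + a2 + a3)
              - (\<Sum>a\<in>{a1, a2, a3}. chi (u a) * k a)"
  shows "(\<Sum>y\<in>unit_circle n. chi (h3_circle a1 a2 a3 b y)) = chi (h3_circle a1 a2 a3 b 0)"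
proof -
  define u where "u = (\<lambda>x. tr 1 (2 * n) (cj n x * b / (1 + b * cj n b)))"
  define k where "k = (\<lambda>x. kloost n (x * cj n x / (1 + b\<^sup>2 * (cj n b)\<^sup>2)))"
  have u_add: "u (a1 + a2 + a3) = u a1 + u a2 + u a3"
    by (simp add: u_def cj_add distrib_right add_divide_distrib tr_add)
  have "2 * chi (maj3 (u a1) (u a2) (u a3)) = chi (u a1) + chi (u a2) + chi (u a3) - chi (u (a1 + a2 + a3))"
    unfolding u_add by (intro chi_maj3) (simp_all add: u_def is_bit_tr_2n)
  moreover have "2 * (\<Sum>y\<in>unit_circle n. chi (h3_circle a1 a2 a3 b y)) =
      chi (u a1) * (1 - k a1) + chi (u a2) * (1 - k a2) + chi (u a3) * (1 - k a3)
      - chi (u (a1 + a2 + a3)) * (1 - k (a1 + a2 + a3))"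
    using assms(1-5) by (simp add: sum_chi_h3_circle circle_sum_outside u_def k_def)
  moreover have "2 * chi (h3_circle a1 a2 a3 b 0) = 2 * chi (maj3 (u a1) (u a2) (u a3))
      + chi (u (a1 + a2 + a3)) * k (a1 + a2 + a3) - (chi (u a1) * k a1 + chi (u a2) * k a2 + chi (u a3) * k a3)"
    using assms(6-9) by (simp add: u_def k_def maj3_def Let_def)
  ultimately have "2 * (\<Sum>y\<in>unit_circle n. chi (h3_circle a1 a2 a3 b y)) = 2 * chi (h3_circle a1 a2 a3 b 0)"
    by (simp add: right_diff_distrib)
  thus ?thesis by simp
qed

lemma Fq_mult_cj_notin_Fq:
  assumes "(b::'a) \<in> unit_circle n - {1}" "a \<in> Fq n - {0}"
  shows "a * cj n b \<notin> Fq n"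
proof
  assume "a * cj n b \<in> Fq n"
  hence "a * b = a * cj n b" using assms by (simp add: Fq_iff_cj cj_mult)
  hence "cj n b = b" using assms by simp
  hence "b * b = 1" using assms by (simp add: unit_circle_iff)
  moreover have "(b + 1)^2 = b * b + 1" using power2_add[of b 1] by (simp add: power2_eq_square)
  ultimately have "(b + 1)^2 = 0" by simp
  hence "b = 1" by (simp add: add_eq_0_iff_eq)
  thus False using assms by simp
qed

lemma norm_eq_square_mult_cj:
  assumes "(b::'a) \<in> unit_circle n" "a * cj n b \<in> Fq n"
  shows "a * cj n a = (a * cj n b)^2"
proof -
  have "cj n a * b = a * cj n b" using assms(2) by (simp add: Fq_iff_cj cj_mult)
  hence "a * cj n a * (b * cj n b) = (a * cj n b)^2" by (simp add: power2_eq_square mult_ac)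
  thus ?thesis using assms(1) by (simp add: unit_circle_iff)
qed

lemma sign_balanced_b1_a2_in_Fq:
  assumes "a1 \<in> Fq n" "a2 \<in> Fq n" "a3 \<notin> Fq n" "tr 1 n (a1 + a2) = 1"
  shows "sign_balanced 1 a1 a2 a3" and "h3_circle a1 a2 a3 1 0 = 0"
proof -
  have "a1 + a2 + a3 \<notin> Fq n"
  proof
    assume "a1 + a2 + a3 \<in> Fq n"
    hence "(a1 + a2 + a3) + (a1 + a2) \<in> Fq n" using Fq_add[OF assms(1,2)] by (rule Fq_add)
    moreover have "(a1 + a2 + a3) + (a1 + a2) = a3" by (simp add: add_ac)
    ultimately show False using assms(3) by simp
  qed
  moreover have "chi (tr 1 n a1) + chi (tr 1 n a2) = 0"
    using assms by (intro chi_add_eq_1) (simp_all add: is_bit_tr_Fq tr_add)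
  ultimately show "sign_balanced 1 a1 a2 a3"
    using assms by (simp add: sign_balanced_def subfield_sign_def)
  show "h3_circle a1 a2 a3 1 0 = 0"
    using assms by (simp add: h3_circle_def maj3_def tr_2n_Fq)
qed

lemma sign_balanced_b1_a2_notin_Fq:
  assumes "a1 \<in> Fq n" "a2 \<notin> Fq n" "a3 \<notin> Fq n" "a2 + a3 \<in> Fq n"
    and "tr 1 n (a2 + a3) = 0" "tr 1 (2*n) a2 = 0"
  shows "sign_balanced 1 a1 a2 a3" and "h3_circle a1 a2 a3 1 0 = 0"
proof -
  have "a1 + a2 + a3 \<in> Fq n" using assms by (simp add: add.assoc Fq_add)
  moreover have "tr 1 n (a1 + a2 + a3) = tr 1 n a1" using assms by (simp add: add.assoc tr_add)
  ultimately show "sign_balanced 1 a1 a2 a3"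
    using assms by (simp add: sign_balanced_def subfield_sign_def)
  show "h3_circle a1 a2 a3 1 0 = 0"
    using assms by (simp add: h3_circle_def maj3_def tr_2n_Fq)
qed

lemma sign_balanced_a2_a3_in_Fq:
  assumes b: "b \<in> unit_circle n - {1}" and a1: "a1 \<in> Fq n - {0}"
    and F2: "a2 * cj n b \<in> Fq n" and F3: "a3 * cj n b \<in> Fq n"
    and "tr 1 n (a2 * cj n a2 + a3 * cj n a3) = 1"
  shows "sign_balanced b a1 a2 a3"
proof -
  have A1: "a1 * cj n b \<notin> Fq n" using Fq_mult_cj_notin_Fq[OF b a1] .
  have "(a1 + a2 + a3) * cj n b \<notin> Fq n"
  proof
    assume "(a1 + a2 + a3) * cj n b \<in> Fq n"
    hence "(a1 + a2 + a3) * cj n b + (a2 * cj n b + a3 * cj n b) \<in> Fq n" using F2 F3 by (intro Fq_add)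
    moreover have "(a1 + a2 + a3) * cj n b + (a2 * cj n b + a3 * cj n b) = a1 * cj n b"
      by (simp add: distrib_right add_ac)
    ultimately show False using A1 by simp
  qed
  moreover have "tr 1 n (a2 * cj n b) + tr 1 n (a3 * cj n b) = 1"
    using assms(5) b F2 F3 norm_eq_square_mult_cj[of b a2] norm_eq_square_mult_cj[of b a3]
    by (simp add: tr_add tr_Fq_square)
  hence "chi (tr 1 n (a2 * cj n b)) + chi (tr 1 n (a3 * cj n b)) = 0"
    using F2 F3 by (intro chi_add_eq_1 is_bit_tr_Fq)
  ultimately show ?thesis using A1 F2 F3 by (simp add: sign_balanced_def subfield_sign_def)
qed

lemma sign_balanced_a3_notin_Fq:
  assumes b: "b \<in> unit_circle n - {1}" and a1: "a1 \<in> Fq n - {0}"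
    and F2: "a2 * cj n b \<in> Fq n" and F3: "a3 * cj n b \<notin> Fq n"
    and Fs: "(a1 + a2 + a3) * cj n b \<in> Fq n"
    and "tr 1 n (a2 * cj n a2) = tr 1 n ((a1 + a2 + a3) * (a1 + cj n a2 + cj n a3))"
  shows "sign_balanced b a1 a2 a3"
proof -
  have "cj n (a1 + a2 + a3) = a1 + cj n a2 + cj n a3" using a1 by (simp add: cj_add Fq_iff_cj)
  have "tr 1 n (a2 * cj n b) = tr 1 n (a2 * cj n a2)"
    using b F2 norm_eq_square_mult_cj[of b a2] by (simp add: tr_Fq_square)
  also have "\<dots> = tr 1 n ((a1 + a2 + a3) * cj n (a1 + a2 + a3))"
    using assms(6) \<open>cj n (a1 + a2 + a3) = a1 + cj n a2 + cj n a3\<close> by simp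
  also have "\<dots> = tr 1 n ((a1 + a2 + a3) * cj n b)"
    using b Fs norm_eq_square_mult_cj[of b "a1 + a2 + a3"] by (simp add: tr_Fq_square)
  finally show ?thesis using Fq_mult_cj_notin_Fq[OF b a1] F2 F3 Fs
    by (simp add: sign_balanced_def subfield_sign_def)
qed

lemma sign_balanced_all_notin_Fq:
  assumes "b \<in> unit_circle n - {1}" "a1 \<in> Fq n - {0}"
    and "a2 * cj n b \<notin> Fq n" "a3 * cj n b \<notin> Fq n" "(a1 + a2 + a3) * cj n b \<notin> Fq n"
  shows "sign_balanced b a1 a2 a3"
  using assms Fq_mult_cj_notin_Fq[OF assms(1,2)] by (simp add: sign_balanced_def subfield_sign_def)

end

theorem theorem3:
  fixes n :: nat and a1 a2 a3 b :: "'a::{field,finite}"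
  assumes n: "n > 2"
    and card: "card (UNIV :: 'a set) = 2 ^ (2 * n)"
    and a1: "a1 \<in> Fq n" "a1 \<noteq> 0"
    and a23: "a2 \<noteq> 0" "a3 \<noteq> 0"
    and dist: "a1 \<noteq> a2" "a1 \<noteq> a3" "a2 \<noteq> a3"
    and sum: "a1 + a2 + a3 \<noteq> 0"
    and b: "b \<noteq> 0"
    and conds:
      "(b = 1 \<and> a2 \<in> Fq n \<and> a3 \<notin> Fq n \<and> tr 1 n (a1 + a2) = 1)
     \<or> (b = 1 \<and> a2 \<notin> Fq n \<and> a3 \<notin> Fq n \<and> a2 + a3 \<in> Fq n
          \<and> tr 1 n (a2 + a3) = 0 \<and> tr 1 (2 * n) a2 = 0)
     \<or> (b \<in> unit_circle n - {1} \<and> tr n (2 * n) (a2 * cj n b) = 0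
          \<and> tr n (2 * n) (a3 * cj n b) = 0
          \<and> tr 1 n (a2 * cj n a2 + a3 * cj n a3) = 1 \<and> h3 n a1 a2 a3 b 0 = 0)
     \<or> (b \<in> unit_circle n - {1} \<and> tr n (2 * n) (a2 * cj n b) = 0
          \<and> tr n (2 * n) (a3 * cj n b) \<noteq> 0
          \<and> tr n (2 * n) ((a1 + a2 + a3) * cj n b) = 0
          \<and> tr 1 n (a2 * cj n a2) = tr 1 n ((a1 + a2 + a3) * (a1 + cj n a2 + cj n a3))
          \<and> h3 n a1 a2 a3 b 0 = 0)
     \<or> (b \<in> unit_circle n - {1} \<and> tr n (2 * n) (a2 * cj n b) \<noteq> 0
          \<and> tr n (2 * n) (a3 * cj n b) \<noteq> 0
          \<and> tr n (2 * n) ((a1 + a2 + a3) * cj n b) \<noteq> 0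
          \<and> h3 n a1 a2 a3 b 0 = 0)
     \<or> (b \<notin> unit_circle n \<and>
          (let k = (\<lambda>x. kloost n (x * cj n x / (1 + b\<^sup>2 * (cj n b)\<^sup>2)));
               u = (\<lambda>x. tr 1 (2 * n) (cj n x * b / (1 + b * cj n b)))
           in 2 * chi (h3 n a1 a2 a3 b 0) =
                2 * chi (u a1 * u a2 + u a1 * u a3 + u a2 * u a3)
                + chi (u (a1 + a2 + a3)) * k (a1 + a2 + a3)
                - (\<Sum>a\<in>{a1, a2, a3}. chi (u a) * k a)))"
  shows "bent (2 * n) (h3 n a1 a2 a3 b)"
proof -
  interpret binary_quadratic_field n "TYPE('a)"
    using n card by unfold_locales simp_all
  have a1': "a1 \<in> Fq n - {0}" using a1 by simp
  have one: "(1::'a) \<in> unit_circle n" by (simp add: unit_circle_iff)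
  have "(\<Sum>y\<in>unit_circle n. chi (h3_circle a1 a2 a3 b y)) = chi (h3_circle a1 a2 a3 b 0)"
    using conds unfolding tr_n_2n_eq_0_iff h3_zero
  proof (elim disjE conjE)
    assume "b = 1" "a2 \<in> Fq n" "a3 \<notin> Fq n" "tr 1 n (a1 + a2) = 1"
    thus ?thesis using a1 one sign_balanced_b1_a2_in_Fq
      by (simp add: sum_chi_h3_circle_unit_circle)
  next
    assume "b = 1" "a2 \<notin> Fq n" "a3 \<notin> Fq n" "a2 + a3 \<in> Fq n" "tr 1 n (a2 + a3) = 0" "tr 1 (2 * n) a2 = 0"
    thus ?thesis using a1 one sign_balanced_b1_a2_notin_Fq
      by (simp add: sum_chi_h3_circle_unit_circle)
  next
    assume "b \<in> unit_circle n - {1}" "a2 * cj n b \<in> Fq n" "a3 * cj n b \<in> Fq n"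
      "tr 1 n (a2 * cj n a2 + a3 * cj n a3) = 1" "h3_circle a1 a2 a3 b 0 = 0"
    thus ?thesis using a1' sign_balanced_a2_a3_in_Fq by (simp add: sum_chi_h3_circle_unit_circle)
  next
    assume "b \<in> unit_circle n - {1}" "a2 * cj n b \<in> Fq n" "a3 * cj n b \<notin> Fq n"
      "(a1 + a2 + a3) * cj n b \<in> Fq n"
      "tr 1 n (a2 * cj n a2) = tr 1 n ((a1 + a2 + a3) * (a1 + cj n a2 + cj n a3))"
      "h3_circle a1 a2 a3 b 0 = 0"
    thus ?thesis using a1' sign_balanced_a3_notin_Fq by (simp add: sum_chi_h3_circle_unit_circle)
  next
    assume "b \<in> unit_circle n - {1}" "a2 * cj n b \<notin> Fq n" "a3 * cj n b \<notin> Fq n"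
      "(a1 + a2 + a3) * cj n b \<notin> Fq n" "h3_circle a1 a2 a3 b 0 = 0"
    thus ?thesis using a1' sign_balanced_all_notin_Fq by (simp add: sum_chi_h3_circle_unit_circle)
  qed (use a1 a23 dist sum in \<open>simp add: sum_chi_h3_circle_outside\<close>)
  thus ?thesis unfolding h3_eq_h3_circle by (rule bent_power_q_minus_1I[OF is_bit_h3_circle])
qed

end
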